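(* Under the standing assumptions below, the map $\theta\mapsto-\bar g(\theta)$ is a gradient splitting of the quadratic $$f(\theta)=(1-\gamma)\|V_\theta-V_{\theta^*}\|_D^2+\gamma\|V_\theta-V_{\theta^*}\|_{\rm Dir}^2 .$$ Explicitly, $-\bar g(\theta)=B(\theta-\theta^* )$ with $B=E[\phi(\phi-\gamma\phi')^T]$, $f(\theta)=(\theta-\theta^* )^TB(\theta-\theta^* )$, and $B+B^T=2A$ where $A$ is the symmetric matrix with $f(\theta)=(\theta-\theta^* )^TA(\theta-\theta^* )$; here $\phi=\phi(s)$, $\phi'=\phi(s')$ with $s\sim\pi$ and $s'\sim P(s,\cdot)$.
   Context: Setting: finite state space $\mathcal S=[n]$, a fixed policy inducing a transition matrix $P\in\mathbb{R}^{n\times n}$ which is irreducible and aperiodic, with unique stationary distribution $\pi=(\pi_1,\dots,\pi_n)$ (row vector); $D=\mathrm{diag}(\pi_1,\dots,\pi_n)$. Rewards $r(s,a,s')$ are deterministic and bounded, $r(s,s')=\sum_a\mu(s,a)r(s,a,s')$ where $\mu$ is the policy; $\gamma\in(0,1)$ is the discount factor. Features: $\Phi=[\phi_1,\dots,\phi_K]\in\mathbb{R}^{n\times K}$ has full column rank, $\phi(s)=(\phi_1(s),\dots,\phi_K(s))^T$ with $\|\phi(s)\|_2\le 1$, and $V_\theta=\Phi\theta$ (so $V_\theta(s)=\theta^T\phi(s)$). Norms: $\|V\|_D^2=\sum_s\pi_sV(s)^2$; Dirichlet seminorm $\|V\|_{\rm Dir}^2=\frac12\sum_{s,s'}\pi_sP(s,s')(V(s')-V(s))^2$.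 Mean TD(0) direction: $\bar g(\theta)=\sum_{s,s'}\pi_sP(s,s')\big(r(s,s')+\gamma\phi(s')^T\theta-\phi(s)^T\theta\big)\phi(s)$, and $\theta^*$ is the unique vector with $\bar g(\theta^* )=0$. Gradient splitting: for symmetric PSD $A$ and $f(\theta)=(\theta-a)^TA(\theta-a)$, a linear map $h(\theta)=B(\theta-a)$ is a gradient splitting of $f$ if $B+B^T=2A$. *)

theory Defs
  imports "HOL-Analysis.Analysis"
begin

fun mpow :: "('s::finite \<Rightarrow> 's \<Rightarrow> real) \<Rightarrow> nat \<Rightarrow> 's \<Rightarrow> 's \<Rightarrow> real" where
  "mpow P 0 = (\<lambda>s s'. if s = s' then 1 else 0)"
| "mpow P (Suc n) = (\<lambda>s s'. \<Sum>u\<in>UNIV. mpow P n s u * P u s')"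

definition stochastic :: "('s::finite \<Rightarrow> 's \<Rightarrow> real) \<Rightarrow> bool" where
  "stochastic P \<longleftrightarrow> (\<forall>s s'. P s s' \<ge> 0) \<and> (\<forall>s. (\<Sum>s'\<in>UNIV. P s s') = 1)"

definition irreducible_chain :: "('s::finite \<Rightarrow> 's \<Rightarrow> real) \<Rightarrow> bool" where
  "irreducible_chain P \<longleftrightarrow> (\<forall>s s'. \<exists>n>0. mpow P n s s' > 0)"

definition aperiodic_chain :: "('s::finite \<Rightarrow> 's \<Rightarrow> real) \<Rightarrow> bool" where
  "aperiodic_chain P \<longleftrightarrow> (\<forall>s. Gcd {n::nat. n > 0 \<and> mpow P n s s > 0} = 1)"

definition stationary_dist :: "('s::finite \<Rightarrow> 's \<Rightarrow> real) \<Rightarrow> ('s \<Rightarrow> real) \<Rightarrow> bool" where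
  "stationary_dist P \<pi> \<longleftrightarrow> (\<forall>s. \<pi> s \<ge> 0) \<and> (\<Sum>s\<in>UNIV. \<pi> s) = 1
     \<and> (\<forall>s'. (\<Sum>s\<in>UNIV. \<pi> s * P s s') = \<pi> s')"

definition pol_reward :: "('s \<Rightarrow> 'a::finite \<Rightarrow> real) \<Rightarrow> ('s \<Rightarrow> 'a \<Rightarrow> 's \<Rightarrow> real) \<Rightarrow> 's \<Rightarrow> 's \<Rightarrow> real" where
  "pol_reward \<mu> r s s' = (\<Sum>a\<in>UNIV. \<mu> s a * r s a s')"

definition Vlin :: "('s \<Rightarrow> real^'k) \<Rightarrow> real^'k \<Rightarrow> 's \<Rightarrow> real" where
  "Vlin \<phi> \<theta> s = \<theta> \<bullet> \<phi> s"

definition full_col_rank :: "('s \<Rightarrow> real^'k) \<Rightarrow> bool" where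
  "full_col_rank \<phi> \<longleftrightarrow> (\<forall>\<theta>. (\<forall>s. \<theta> \<bullet> \<phi> s = 0) \<longrightarrow> \<theta> = 0)"

definition D_norm_sq :: "('s::finite \<Rightarrow> real) \<Rightarrow> ('s \<Rightarrow> real) \<Rightarrow> real" where
  "D_norm_sq \<pi> V = (\<Sum>s\<in>UNIV. \<pi> s * (V s)\<^sup>2)"

definition Dir_norm_sq :: "('s::finite \<Rightarrow> 's \<Rightarrow> real) \<Rightarrow> ('s \<Rightarrow> real) \<Rightarrow> ('s \<Rightarrow> real) \<Rightarrow> real" where
  "Dir_norm_sq P \<pi> V = (1/2) * (\<Sum>s\<in>UNIV. \<Sum>s'\<in>UNIV. \<pi> s * P s s' * (V s' - V s)\<^sup>2)"

definition gbar :: "('s::finite \<Rightarrow> 's \<Rightarrow> real) \<Rightarrow> ('s \<Rightarrow> real) \<Rightarrow> ('s \<Rightarrow> 's \<Rightarrow> real)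
    \<Rightarrow> real \<Rightarrow> ('s \<Rightarrow> real^'k) \<Rightarrow> real^'k \<Rightarrow> real^'k" where
  "gbar P \<pi> rr \<gamma> \<phi> \<theta> = (\<Sum>s\<in>UNIV. \<Sum>s'\<in>UNIV.
      (\<pi> s * P s s' * (rr s s' + \<gamma> * (\<phi> s' \<bullet> \<theta>) - \<phi> s \<bullet> \<theta>)) *\<^sub>R \<phi> s)"

definition Bmat :: "('s::finite \<Rightarrow> 's \<Rightarrow> real) \<Rightarrow> ('s \<Rightarrow> real) \<Rightarrow> real \<Rightarrow> ('s \<Rightarrow> real^'k) \<Rightarrow> real^'k^'k" where
  "Bmat P \<pi> \<gamma> \<phi> = (\<chi> i j. \<Sum>s\<in>UNIV. \<Sum>s'\<in>UNIV.
      \<pi> s * P s s' * (\<phi> s $ i * (\<phi> s $ j - \<gamma> * \<phi> s' $ j)))"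

definition psd :: "real^'k^'k \<Rightarrow> bool" where
  "psd A \<longleftrightarrow> (\<forall>x. 0 \<le> x \<bullet> (A *v x))"

definition gradient_splitting :: "(real^'k \<Rightarrow> real^'k) \<Rightarrow> (real^'k \<Rightarrow> real) \<Rightarrow> bool" where
  "gradient_splitting h f \<longleftrightarrow> (\<exists>A B a. transpose A = A \<and> psd A
      \<and> (\<forall>\<theta>. f \<theta> = (\<theta> - a) \<bullet> (A *v (\<theta> - a)))
      \<and> (\<forall>\<theta>. h \<theta> = B *v (\<theta> - a))
      \<and> B + transpose B = 2 *\<^sub>R A)"

end

theory Submission
  imports Defs
begin

text \<open>Writing \<open>v = V\<^sub>\<theta> - V\<^sub>\<theta>\<^sub>*\<close>, the fixed-point equation turns \<open>-g(\<theta>)\<close> into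
  \<open>B(\<theta> - \<theta>\<^sub>*)\<close>, whose quadratic form is \<open>E[v(s)(v(s) - \<gamma> v(s'))]\<close>. Stationarity of \<open>\<pi>\<close>
  makes \<open>s\<close> and \<open>s'\<close> both \<open>\<pi>\<close>-distributed, so \<open>E[v(s)\<^sup>2] = E[v(s')\<^sup>2] = \<parallel>v\<parallel>\<^sub>D\<^sup>2\<close> and
  \<open>E[v(s)v(s')] = \<parallel>v\<parallel>\<^sub>D\<^sup>2 - \<parallel>v\<parallel>\<^sub>D\<^sub>i\<^sub>r\<^sup>2\<close>; hence the quadratic form equals \<open>f\<close>.
  A quadratic form only sees the symmetric part \<open>A = (B + B\<^sup>T)/2\<close> of \<open>B\<close>, which is
  positive semidefinite because \<open>f \<ge> 0\<close>.\<close>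

lemma Bmat_mult_vec:
  "Bmat P \<pi> \<gamma> \<phi> *v x
     = (\<Sum>s\<in>UNIV. \<Sum>s'\<in>UNIV. (\<pi> s * P s s' * (\<phi> s \<bullet> x - \<gamma> * (\<phi> s' \<bullet> x))) *\<^sub>R \<phi> s)"
proof (subst vec_eq_iff, intro allI)
  fix i
  have "(Bmat P \<pi> \<gamma> \<phi> *v x) $ i = (\<Sum>j\<in>UNIV. \<Sum>s\<in>UNIV. \<Sum>s'\<in>UNIV.
      \<pi> s * P s s' * (\<phi> s $ i * (\<phi> s $ j - \<gamma> * \<phi> s' $ j)) * x $ j)"
    by (simp add: matrix_vector_mult_def Bmat_def sum_distrib_right)
  also have "\<dots> = (\<Sum>s\<in>UNIV. \<Sum>s'\<in>UNIV. \<Sum>j\<in>UNIV.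
      \<pi> s * P s s' * (\<phi> s $ i * (\<phi> s $ j - \<gamma> * \<phi> s' $ j)) * x $ j)"
    by (subst sum.swap) (intro sum.cong refl sum.swap)
  also have "\<dots> = (\<Sum>s\<in>UNIV. \<Sum>s'\<in>UNIV.
      (\<pi> s * P s s' * (\<phi> s \<bullet> x - \<gamma> * (\<phi> s' \<bullet> x))) * \<phi> s $ i)"
    by (intro sum.cong refl)
      (simp add: inner_vec_def sum_distrib_left sum_subtractf algebra_simps)
  finally show "(Bmat P \<pi> \<gamma> \<phi> *v x) $ i = (\<Sum>s\<in>UNIV. \<Sum>s'\<in>UNIV.
      (\<pi> s * P s s' * (\<phi> s \<bullet> x - \<gamma> * (\<phi> s' \<bullet> x))) *\<^sub>R \<phi> s) $ i"
    by (simp add: sum_component)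
qed

lemma gbar_diff:
  "gbar P \<pi> rr \<gamma> \<phi> \<theta> - gbar P \<pi> rr \<gamma> \<phi> t = - (Bmat P \<pi> \<gamma> \<phi> *v (\<theta> - t))"
  unfolding gbar_def Bmat_mult_vec
  by (simp add: sum_subtractf[symmetric] sum_negf[symmetric] scaleR_diff_left[symmetric]
      inner_diff_right inner_commute algebra_simps)

lemma uminus_gbar_eq_Bmat_mult_vec:
  assumes "gbar P \<pi> rr \<gamma> \<phi> \<theta>s = 0"
  shows "- gbar P \<pi> rr \<gamma> \<phi> \<theta> = Bmat P \<pi> \<gamma> \<phi> *v (\<theta> - \<theta>s)"
  using gbar_diff[of P \<pi> rr \<gamma> \<phi> \<theta> \<theta>s] assms by simp

lemma inner_Bmat_mult_vec:
  "x \<bullet> (Bmat P \<pi> \<gamma> \<phi> *v x)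
     = (\<Sum>s\<in>UNIV. \<Sum>s'\<in>UNIV. \<pi> s * P s s' * (\<phi> s \<bullet> x - \<gamma> * (\<phi> s' \<bullet> x)) * (\<phi> s \<bullet> x))"
  by (simp add: Bmat_mult_vec inner_sum_right inner_commute)

lemma stochastic_sum_pair_left:
  assumes "stochastic P"
  shows "(\<Sum>s\<in>UNIV. \<Sum>s'\<in>UNIV. \<pi> s * P s s' * g s) = (\<Sum>s\<in>UNIV. \<pi> s * g s)"
proof -
  have "(\<Sum>s'\<in>UNIV. \<pi> s * P s s' * g s) = \<pi> s * g s * (\<Sum>s'\<in>UNIV. P s s')" for s
    by (simp add: sum_distrib_left algebra_simps)
  then show ?thesis
    using assms by (simp add: stochastic_def)
qed

lemma stationary_sum_pair_right:
  assumes "stationary_dist P \<pi>"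
  shows "(\<Sum>s\<in>UNIV. \<Sum>s'\<in>UNIV. \<pi> s * P s s' * g s') = (\<Sum>s'\<in>UNIV. \<pi> s' * g s')"
proof -
  have "(\<Sum>s\<in>UNIV. \<Sum>s'\<in>UNIV. \<pi> s * P s s' * g s')
      = (\<Sum>s'\<in>UNIV. (\<Sum>s\<in>UNIV. \<pi> s * P s s') * g s')"
    by (subst sum.swap) (simp add: sum_distrib_right)
  then show ?thesis
    using assms by (simp add: stationary_dist_def)
qed

lemma Dir_norm_sq_eq:
  assumes "stochastic P" and "stationary_dist P \<pi>"
  shows "Dir_norm_sq P \<pi> v
     = D_norm_sq \<pi> v - (\<Sum>s\<in>UNIV. \<Sum>s'\<in>UNIV. \<pi> s * P s s' * (v s' * v s))"
proof -
  have "(\<Sum>s\<in>UNIV. \<Sum>s'\<in>UNIV. \<pi> s * P s s' * (v s' - v s)\<^sup>2)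
      = (\<Sum>s\<in>UNIV. \<Sum>s'\<in>UNIV. \<pi> s * P s s' * (v s')\<^sup>2)
        + (\<Sum>s\<in>UNIV. \<Sum>s'\<in>UNIV. \<pi> s * P s s' * (v s)\<^sup>2)
        - 2 * (\<Sum>s\<in>UNIV. \<Sum>s'\<in>UNIV. \<pi> s * P s s' * (v s' * v s))"
    by (simp add: power2_eq_square algebra_simps sum.distrib sum_subtractf sum_distrib_left)
  then show ?thesis
    by (simp add: Dir_norm_sq_def D_norm_sq_def stochastic_sum_pair_left[OF assms(1)]
        stationary_sum_pair_right[OF assms(2)])
qed

lemma D_Dir_combination_eq:
  assumes "stochastic P" and "stationary_dist P \<pi>"
  shows "(1 - \<gamma>) * D_norm_sq \<pi> v + \<gamma> * Dir_norm_sq P \<pi> v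
     = (\<Sum>s\<in>UNIV. \<Sum>s'\<in>UNIV. \<pi> s * P s s' * (v s - \<gamma> * v s') * v s)"
proof -
  define C where "C = (\<Sum>s\<in>UNIV. \<Sum>s'\<in>UNIV. \<pi> s * P s s' * (v s' * v s))"
  have "(\<Sum>s\<in>UNIV. \<Sum>s'\<in>UNIV. \<pi> s * P s s' * (v s - \<gamma> * v s') * v s)
      = (\<Sum>s\<in>UNIV. \<Sum>s'\<in>UNIV. \<pi> s * P s s' * (v s)\<^sup>2) - \<gamma> * C"
    unfolding C_def
    by (simp add: power2_eq_square algebra_simps sum_subtractf sum_distrib_left)
  also have "\<dots> = D_norm_sq \<pi> v - \<gamma> * C"
    by (simp add: stochastic_sum_pair_left[OF assms(1)] D_norm_sq_def)
  finally show ?thesis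
    unfolding Dir_norm_sq_eq[OF assms] C_def by (simp add: algebra_simps)
qed

lemma inner_Bmat_eq_D_Dir:
  assumes "stochastic P" and "stationary_dist P \<pi>"
  shows "x \<bullet> (Bmat P \<pi> \<gamma> \<phi> *v x)
     = (1 - \<gamma>) * D_norm_sq \<pi> (\<lambda>s. \<phi> s \<bullet> x) + \<gamma> * Dir_norm_sq P \<pi> (\<lambda>s. \<phi> s \<bullet> x)"
  by (simp add: inner_Bmat_mult_vec D_Dir_combination_eq[OF assms])

lemma D_norm_sq_nonneg: "(\<And>s. \<pi> s \<ge> 0) \<Longrightarrow> D_norm_sq \<pi> v \<ge> 0"
  by (simp add: D_norm_sq_def sum_nonneg)

lemma Dir_norm_sq_nonneg:
  "(\<And>s. \<pi> s \<ge> 0) \<Longrightarrow> (\<And>s s'. P s s' \<ge> 0) \<Longrightarrow> Dir_norm_sq P \<pi> v \<ge> 0"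
  unfolding Dir_norm_sq_def by (intro mult_nonneg_nonneg sum_nonneg) auto

lemma inner_Bmat_nonneg:
  assumes "stochastic P" and "stationary_dist P \<pi>" and "0 \<le> \<gamma>" and "\<gamma> \<le> 1"
  shows "0 \<le> x \<bullet> (Bmat P \<pi> \<gamma> \<phi> *v x)"
proof -
  have "\<pi> s \<ge> 0" "P s s' \<ge> 0" for s s'
    using assms(1,2) by (auto simp: stochastic_def stationary_dist_def)
  then show ?thesis
    unfolding inner_Bmat_eq_D_Dir[OF assms(1,2)] using assms(3,4)
    by (intro add_nonneg_nonneg mult_nonneg_nonneg D_norm_sq_nonneg Dir_norm_sq_nonneg) auto
qed

definition sym_part :: "real^'n^'n \<Rightarrow> real^'n^'n" where
  "sym_part B = (1/2) *\<^sub>R (B + transpose B)"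

lemma transpose_sym_part: "transpose (sym_part B) = sym_part B"
  by (simp add: sym_part_def vec_eq_iff transpose_def)

lemma sym_part_add_transpose: "B + transpose B = 2 *\<^sub>R sym_part B"
  by (simp add: sym_part_def)

lemma inner_transpose_mult_vec: "x \<bullet> (transpose B *v x) = x \<bullet> (B *v x)"
  for B :: "real^'n^'n"
  by (simp add: dot_lmul_matrix[symmetric] inner_commute)

lemma inner_sym_part_mult_vec: "x \<bullet> (sym_part B *v x) = x \<bullet> (B *v x)"
  by (simp add: sym_part_def scaleR_matrix_vector_assoc[symmetric] matrix_vector_mult_add_rdistrib
      inner_add_right inner_transpose_mult_vec del: transpose_matrix_vector)

lemma gradient_splitting_linear:
  fixes B :: "real^'n^'n"
  assumes "\<And>x. 0 \<le> x \<bullet> (B *v x)"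
    and "\<And>\<theta>. h \<theta> = B *v (\<theta> - a)" and "\<And>\<theta>. f \<theta> = (\<theta> - a) \<bullet> (B *v (\<theta> - a))"
  shows "gradient_splitting h f"
  unfolding gradient_splitting_def psd_def
  using assms transpose_sym_part inner_sym_part_mult_vec sym_part_add_transpose by metis

theorem theorem1:
  fixes P :: "'s::finite \<Rightarrow> 's \<Rightarrow> real" and \<pi> :: "'s \<Rightarrow> real"
    and \<mu> :: "'s \<Rightarrow> 'a::finite \<Rightarrow> real" and r :: "'s \<Rightarrow> 'a \<Rightarrow> 's \<Rightarrow> real"
    and \<gamma> :: real and \<phi> :: "'s \<Rightarrow> real^'k" and \<theta>s :: "real^'k"
  assumes "stochastic P" and "irreducible_chain P" and "aperiodic_chain P"
    and "stationary_dist P \<pi>"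
    and "\<forall>s a. \<mu> s a \<ge> 0" and "\<forall>s. (\<Sum>a\<in>UNIV. \<mu> s a) = 1"
    and "0 < \<gamma>" and "\<gamma> < 1"
    and "full_col_rank \<phi>" and "\<forall>s. norm (\<phi> s) \<le> 1"
    and "gbar P \<pi> (pol_reward \<mu> r) \<gamma> \<phi> \<theta>s = 0"
  defines "f \<equiv> (\<lambda>\<theta>. (1 - \<gamma>) * D_norm_sq \<pi> (\<lambda>s. Vlin \<phi> \<theta> s - Vlin \<phi> \<theta>s s)
                     + \<gamma> * Dir_norm_sq P \<pi> (\<lambda>s. Vlin \<phi> \<theta> s - Vlin \<phi> \<theta>s s))"
    and "B \<equiv> Bmat P \<pi> \<gamma> \<phi>"
  shows "gradient_splitting (\<lambda>\<theta>. - gbar P \<pi> (pol_reward \<mu> r) \<gamma> \<phi> \<theta>) f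
    \<and> (\<forall>\<theta>. - gbar P \<pi> (pol_reward \<mu> r) \<gamma> \<phi> \<theta> = B *v (\<theta> - \<theta>s))
    \<and> (\<forall>\<theta>. f \<theta> = (\<theta> - \<theta>s) \<bullet> (B *v (\<theta> - \<theta>s)))
    \<and> (\<exists>A. transpose A = A \<and> (\<forall>\<theta>. f \<theta> = (\<theta> - \<theta>s) \<bullet> (A *v (\<theta> - \<theta>s)))
          \<and> B + transpose B = 2 *\<^sub>R A)"
proof -
  have g_eq: "- gbar P \<pi> (pol_reward \<mu> r) \<gamma> \<phi> \<theta> = B *v (\<theta> - \<theta>s)" for \<theta>
    unfolding B_def using assms(11) by (rule uminus_gbar_eq_Bmat_mult_vec)
  have "(\<lambda>s. Vlin \<phi> \<theta> s - Vlin \<phi> \<theta>s s) = (\<lambda>s. \<phi> s \<bullet> (\<theta> - \<theta>s))" for \<theta>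
    by (simp add: Vlin_def inner_diff_right inner_commute)
  then have f_eq: "f \<theta> = (\<theta> - \<theta>s) \<bullet> (B *v (\<theta> - \<theta>s))" for \<theta>
    unfolding f_def B_def by (simp add: inner_Bmat_eq_D_Dir[OF assms(1,4)])
  have B_nonneg: "0 \<le> x \<bullet> (B *v x)" for x
    unfolding B_def using assms(1,4,7,8) by (intro inner_Bmat_nonneg) auto
  show ?thesis
    using gradient_splitting_linear[where f = f, OF B_nonneg g_eq f_eq] g_eq f_eq
      transpose_sym_part[of B] inner_sym_part_mult_vec[of _ B] sym_part_add_transpose[of B]
    by auto
qed

end
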